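(* Let $\Bbbk$ be a field, $n\ge2$, $q\in\Bbbk$ a primitive $n$-th root of unity, $T_n(q)$ the Taft algebra and $A$ a unital associative $\Bbbk$-algebra. Let $\cdot:T_n(q)\otimes A\to A$ be a partial action of $T_n(q)$ on $A$ with $g\cdot1_A=0$. Then for all $a\in A$ and $0\le i,j\le n-1$, $$g^ix^j\cdot a=q^{-ij}\sum_{k=0}^{j}(-1)^kq^{-\frac{k(k-1)}{2}}\binom{j}{k}_{q^{-1}}(x\cdot1_A)^{j-k}(g^{i+k}\cdot a)(x\cdot1_A)^k.$$
   Context: The Taft algebra $T_n(q)$ is the Hopf algebra generated by $g,x$ with relations $g^n=1$, $x^n=0$, $xg=qgx$, basis $\{g^ix^j:0\le i,j<n\}$, $g$ group-like, $\Delta(x)=x\otimes1+g\otimes x$, $\varepsilon(x)=0$; exponents of $g$ are read modulo $n$. A partial action of a bialgebra $H$ on $A$ is a linear map $\cdot:H\otimes A\to A$ with $1_H\cdot a=a$, $h\cdot(ab)=(h_1\cdot a)(h_2\cdot b)$, $h\cdot(k\cdot a)=(h_1\cdot1_A)(h_2k\cdot a)$. $q$-binomials: $\binom{0}{0}_p=1$, $\binom{N}{m}_p=0$ if $m>N$ or $m<0$, and $\binom{N}{m}_p=\binom{N-1}{m-1}_p+p^m\binom{N-1}{m}_p$ for $N\ge1$, $0\le m\le N$. *)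

theory Defs
  imports Main
begin

fun qbinom :: "'k::comm_ring_1 \<Rightarrow> nat \<Rightarrow> nat \<Rightarrow> 'k" where
  "qbinom p 0 m = (if m = 0 then 1 else 0)"
| "qbinom p (Suc N) 0 = qbinom p N 0"
| "qbinom p (Suc N) (Suc m) = qbinom p N m + p ^ Suc m * qbinom p N (Suc m)"

definition primitive_root :: "'k::field \<Rightarrow> nat \<Rightarrow> bool" where
  "primitive_root q n \<longleftrightarrow> q ^ n = 1 \<and> (\<forall>m. 0 < m \<and> m < n \<longrightarrow> q ^ m \<noteq> 1)"

text \<open>An element of T_n(q) is a coefficient function on index pairs (i,j),
  only pairs in taft_basis n matter; (i,j) stands for g^i x^j.\<close>

definition taft_basis :: "nat \<Rightarrow> (nat \<times> nat) set" where
  "taft_basis n = {..<n} \<times> {..<n}"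

text \<open>Structure constants: (g^i x^j)(g^k x^l) = q^(jk) g^((i+k) mod n) x^(j+l),
  which is 0 if j+l >= n (from xg = qgx, g^n = 1, x^n = 0).\<close>
definition taft_sc :: "nat \<Rightarrow> 'k::field \<Rightarrow> nat \<times> nat \<Rightarrow> nat \<times> nat \<Rightarrow> nat \<times> nat \<Rightarrow> 'k" where
  "taft_sc n q u v w =
     (if (fst u + fst v) mod n = fst w \<and> snd u + snd v = snd w \<and> snd w < n
      then q ^ (snd u * fst v) else 0)"

definition taft_mult :: "nat \<Rightarrow> 'k::field \<Rightarrow> (nat \<times> nat \<Rightarrow> 'k) \<Rightarrow> (nat \<times> nat \<Rightarrow> 'k) \<Rightarrow> (nat \<times> nat \<Rightarrow> 'k)" where
  "taft_mult n q a b = (\<lambda>w. \<Sum>u\<in>taft_basis n. \<Sum>v\<in>taft_basis n. a u * b v * taft_sc n q u v w)"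

definition taft_elem :: "nat \<times> nat \<Rightarrow> nat \<times> nat \<Rightarrow> 'k::field" where
  "taft_elem u = (\<lambda>v. if v = u then 1 else 0)"

text \<open>T_n(q) \<otimes> T_n(q): coefficient functions on pairs of index pairs, with the
  tensor product algebra structure (a\<otimes>b)(c\<otimes>d) = ac \<otimes> bd.\<close>

definition taft2_mult :: "nat \<Rightarrow> 'k::field \<Rightarrow> ((nat \<times> nat) \<times> (nat \<times> nat) \<Rightarrow> 'k)
    \<Rightarrow> ((nat \<times> nat) \<times> (nat \<times> nat) \<Rightarrow> 'k) \<Rightarrow> ((nat \<times> nat) \<times> (nat \<times> nat) \<Rightarrow> 'k)" where
  "taft2_mult n q S T = (\<lambda>(w, w').
     \<Sum>u\<in>taft_basis n. \<Sum>u'\<in>taft_basis n. \<Sum>v\<in>taft_basis n. \<Sum>v'\<in>taft_basis n.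
       S (u, u') * T (v, v') * taft_sc n q u v w * taft_sc n q u' v' w')"

definition taft2_elem :: "nat \<times> nat \<Rightarrow> nat \<times> nat \<Rightarrow> (nat \<times> nat) \<times> (nat \<times> nat) \<Rightarrow> 'k::field" where
  "taft2_elem u u' = (\<lambda>z. if z = (u, u') then 1 else 0)"

definition taft2_one :: "(nat \<times> nat) \<times> (nat \<times> nat) \<Rightarrow> 'k::field" where
  "taft2_one = taft2_elem (0, 0) (0, 0)"

text \<open>Delta(g) = g \<otimes> g, Delta(x) = x \<otimes> 1 + g \<otimes> x\<close>
definition Delta_g :: "(nat \<times> nat) \<times> (nat \<times> nat) \<Rightarrow> 'k::field" where
  "Delta_g = taft2_elem (1, 0) (1, 0)"

definition Delta_x :: "(nat \<times> nat) \<times> (nat \<times> nat) \<Rightarrow> 'k::field" where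
  "Delta_x = (\<lambda>z. taft2_elem (0, 1) (0, 0) z + taft2_elem (1, 0) (0, 1) z)"

text \<open>Delta is an algebra map: Delta(g^i x^j) = Delta(g)^i Delta(x)^j.\<close>
definition taft_comult :: "nat \<Rightarrow> 'k::field \<Rightarrow> nat \<times> nat \<Rightarrow> (nat \<times> nat) \<times> (nat \<times> nat) \<Rightarrow> 'k" where
  "taft_comult n q u =
     taft2_mult n q ((taft2_mult n q Delta_g ^^ fst u) taft2_one)
                    ((taft2_mult n q Delta_x ^^ snd u) taft2_one)"

definition k_algebra :: "('k::field \<Rightarrow> 'a::{ring, monoid_mult} \<Rightarrow> 'a) \<Rightarrow> bool" where
  "k_algebra smult \<longleftrightarrow>
     (\<forall>c a b. smult c (a + b) = smult c a + smult c b) \<and>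
     (\<forall>c d a. smult (c + d) a = smult c a + smult d a) \<and>
     (\<forall>c d a. smult (c * d) a = smult c (smult d a)) \<and>
     (\<forall>a. smult 1 a = a) \<and>
     (\<forall>c a b. smult c (a * b) = smult c a * b) \<and>
     (\<forall>c a b. smult c (a * b) = a * smult c b)"

text \<open>A linear map T_n(q) \<otimes> A \<rightarrow> A is given by its values act (i,j) a = g^i x^j \<cdot> a
  on basis elements, each k-linear in a; the value on a general h is obtained
  by linear extension.\<close>

definition taft_act_ext :: "nat \<Rightarrow> ('k::field \<Rightarrow> 'a::{ring, monoid_mult} \<Rightarrow> 'a)
    \<Rightarrow> (nat \<times> nat \<Rightarrow> 'a \<Rightarrow> 'a) \<Rightarrow> (nat \<times> nat \<Rightarrow> 'k) \<Rightarrow> 'a \<Rightarrow> 'a" where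
  "taft_act_ext n smult act h a = (\<Sum>u\<in>taft_basis n. smult (h u) (act u a))"

text \<open>The axioms are checked on basis elements h, k (both sides are linear in h and k).\<close>
definition taft_partial_action :: "nat \<Rightarrow> 'k::field \<Rightarrow> ('k \<Rightarrow> 'a::{ring, monoid_mult} \<Rightarrow> 'a)
    \<Rightarrow> (nat \<times> nat \<Rightarrow> 'a \<Rightarrow> 'a) \<Rightarrow> bool" where
  "taft_partial_action n q smult act \<longleftrightarrow>
     (\<forall>u\<in>taft_basis n. \<forall>a b. act u (a + b) = act u a + act u b) \<and>
     (\<forall>u\<in>taft_basis n. \<forall>c a. act u (smult c a) = smult c (act u a)) \<and>
     (\<forall>a. act (0, 0) a = a) \<and>
     (\<forall>u\<in>taft_basis n. \<forall>a b.
        act u (a * b) =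
          (\<Sum>v\<in>taft_basis n. \<Sum>v'\<in>taft_basis n.
             smult (taft_comult n q u (v, v')) (act v a * act v' b))) \<and>
     (\<forall>u\<in>taft_basis n. \<forall>w\<in>taft_basis n. \<forall>a.
        act u (act w a) =
          (\<Sum>v\<in>taft_basis n. \<Sum>v'\<in>taft_basis n.
             smult (taft_comult n q u (v, v'))
               (act v 1 * taft_act_ext n smult act (taft_mult n q (taft_elem v') (taft_elem w)) a)))"

end

theory Submission
  imports Defs "HOL.Modules"
begin

text \<open>
  Write X = x\<cdot>1 and h = g^(n-1)x = g^-1 x. Since g\<cdot>1 = 0, the composition axiom for
  g^-1\<cdot>(g\<cdot>1) gives g^-1\<cdot>1 = 0. The coproduct of h is h \<otimes> g^-1 + 1 \<otimes> h, so the
  axioms applied to h\<cdot>(g\<cdot>1) and h\<cdot>(b * 1) give h\<cdot>1 = -qX and h\<cdot>b = b (h\<cdot>1).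
  Computing h\<cdot>(g^(i+1) x^j\<cdot>a) both ways yields the twisted commutator recursion
  g^i x^(j+1)\<cdot>a = q^-i (X (g^i x^j\<cdot>a) - (g^(i+1) x^j\<cdot>a) X), and iterating it from j = 0
  gives the formula: its coefficients obey the recursion of the coefficients of
  \<Prod>l<j. (1 - q^-l t), which are the signed q-binomials of the statement.
\<close>

lemma power_mod_exponent:
  fixes p :: "'a::monoid_mult"
  assumes "p ^ n = 1"
  shows "p ^ (m mod n) = p ^ m"
proof -
  have "p ^ m = p ^ (n * (m div n) + m mod n)"
    by simp
  also have "\<dots> = (p ^ n) ^ (m div n) * p ^ (m mod n)"
    by (simp only: power_add power_mult)
  finally show ?thesis
    using assms by simp
qed

lemma pred_plus_Suc_mod:
  fixes i n :: nat
  assumes "i < n"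
  shows "(n - 1 + Suc i mod n) mod n = i"
proof (cases "Suc i < n")
  case True
  then have "n - 1 + Suc i = n + i" by simp
  with True show ?thesis by simp
next
  case False
  with assms have "n = Suc i" by simp
  then show ?thesis by simp
qed

lemma qbinom_0_right [simp]: "qbinom p N 0 = 1"
  by (induction N) auto

lemma qbinom_eq_0 [simp]: "N < m \<Longrightarrow> qbinom p N m = 0"
proof (induction N arbitrary: m)
  case (Suc N)
  then show ?case by (cases m) auto
qed simp

lemma qbinom_Suc_Suc':
  "qbinom p (Suc N) (Suc m) = p ^ (N - m) * qbinom p N m + qbinom p N (Suc m)"
proof (induction N arbitrary: m)
  case 0
  then show ?case by simp
next
  case (Suc N)
  show ?case
  proof (cases m)
    case 0
    then show ?thesis using Suc.IH[of 0] by (simp add: algebra_simps)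
  next
    case (Suc m')
    have key: "p ^ Suc (Suc m') * p ^ (N - Suc m') * qbinom p N (Suc m')
        = p ^ (N - m') * p ^ Suc m' * qbinom p N (Suc m')"
    proof (cases "m' < N")
      case True
      then have "Suc (Suc m') + (N - Suc m') = N - m' + Suc m'" by simp
      then show ?thesis by (metis power_add)
    qed simp
    have "qbinom p (Suc (Suc N)) (Suc m)
        = (p ^ (N - m') * qbinom p N m' + qbinom p N (Suc m'))
          + p ^ Suc (Suc m') * (p ^ (N - Suc m') * qbinom p N (Suc m') + qbinom p N (Suc (Suc m')))"
      using Suc.IH[of m'] Suc.IH[of "Suc m'"] Suc by simp
    also have "\<dots> = p ^ (N - m') * (qbinom p N m' + p ^ Suc m' * qbinom p N (Suc m'))
          + (qbinom p N (Suc m') + p ^ Suc (Suc m') * qbinom p N (Suc (Suc m')))"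
      using key by (simp add: algebra_simps)
    also have "\<dots> = p ^ (Suc N - m) * qbinom p (Suc N) m + qbinom p (Suc N) (Suc m)"
      using Suc by simp
    finally show ?thesis .
  qed
qed

text \<open>The coefficient of t^k in \<Prod>l<j. (1 - p^l t).\<close>
definition qpoch_coeff :: "'k::comm_ring_1 \<Rightarrow> nat \<Rightarrow> nat \<Rightarrow> 'k" where
  "qpoch_coeff p j k = (- 1) ^ k * p ^ (k * (k - 1) div 2) * qbinom p j k"

lemma qpoch_coeff_0_right [simp]: "qpoch_coeff p j 0 = 1"
  by (simp add: qpoch_coeff_def)

lemma qpoch_coeff_eq_0 [simp]: "j < k \<Longrightarrow> qpoch_coeff p j k = 0"
  by (simp add: qpoch_coeff_def)

lemma qpoch_coeff_Suc_Suc: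
  "qpoch_coeff p (Suc j) (Suc k) = qpoch_coeff p j (Suc k) - p ^ j * qpoch_coeff p j k"
proof -
  have "p ^ (Suc k * k div 2) * p ^ (j - k) * qbinom p j k
      = p ^ j * p ^ (k * (k - 1) div 2) * qbinom p j k"
  proof (cases "k \<le> j")
    case True
    have "Suc k * k div 2 = k * (k - 1) div 2 + k"
      by (cases k) simp_all
    with True have "Suc k * k div 2 + (j - k) = j + k * (k - 1) div 2" by simp
    then show ?thesis by (metis power_add)
  qed simp
  then show ?thesis
    by (simp add: qpoch_coeff_def qbinom_Suc_Suc' algebra_simps del: qbinom.simps)
qed

locale algebra_over_field = module smult
  for smult :: "'k::field \<Rightarrow> 'a::{ring, monoid_mult} \<Rightarrow> 'a" +
  assumes smult_mult_left: "smult c x * y = smult c (x * y)"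
    and smult_mult_right: "x * smult c y = smult c (x * y)"

lemma k_algebra_imp_algebra_over_field: "k_algebra smult \<Longrightarrow> algebra_over_field smult"
  unfolding k_algebra_def by unfold_locales auto

context algebra_over_field
begin

lemma qpoch_sum_Suc:
  fixes A :: "nat \<Rightarrow> 'a"
  shows "X * (\<Sum>k\<le>j. smult (qpoch_coeff p j k) (X ^ (j - k) * A (i + k) * X ^ k))
      - smult (p ^ j) ((\<Sum>k\<le>j. smult (qpoch_coeff p j k) (X ^ (j - k) * A (Suc i + k) * X ^ k)) * X)
    = (\<Sum>k\<le>Suc j. smult (qpoch_coeff p (Suc j) k) (X ^ (Suc j - k) * A (i + k) * X ^ k))"
proof -
  define t where "t k = X ^ (Suc j - k) * A (i + k) * X ^ k" for k
  have "X * (\<Sum>k\<le>j. smult (qpoch_coeff p j k) (X ^ (j - k) * A (i + k) * X ^ k))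
      = (\<Sum>k\<le>j. smult (qpoch_coeff p j k) (t k))"
    unfolding sum_distrib_left smult_mult_right t_def
    by (intro sum.cong) (simp_all add: Suc_diff_le mult.assoc)
  also have "\<dots> = (\<Sum>k\<le>Suc j. smult (qpoch_coeff p j k) (t k))"
    by simp
  also have "\<dots> = t 0 + (\<Sum>k\<le>j. smult (qpoch_coeff p j (Suc k)) (t (Suc k)))"
    by (simp only: sum.atMost_Suc_shift qpoch_coeff_0_right scale_one)
  finally have left: "X * (\<Sum>k\<le>j. smult (qpoch_coeff p j k) (X ^ (j - k) * A (i + k) * X ^ k))
      = t 0 + (\<Sum>k\<le>j. smult (qpoch_coeff p j (Suc k)) (t (Suc k)))" .
  have right: "(\<Sum>k\<le>j. smult (qpoch_coeff p j k) (X ^ (j - k) * A (Suc i + k) * X ^ k)) * X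
      = (\<Sum>k\<le>j. smult (qpoch_coeff p j k) (t (Suc k)))"
    unfolding sum_distrib_right smult_mult_left t_def
    by (intro sum.cong) (simp_all add: mult.assoc power_commutes)
  have "X * (\<Sum>k\<le>j. smult (qpoch_coeff p j k) (X ^ (j - k) * A (i + k) * X ^ k))
      - smult (p ^ j) ((\<Sum>k\<le>j. smult (qpoch_coeff p j k) (X ^ (j - k) * A (Suc i + k) * X ^ k)) * X)
    = t 0 + ((\<Sum>k\<le>j. smult (qpoch_coeff p j (Suc k)) (t (Suc k)))
        - (\<Sum>k\<le>j. smult (p ^ j * qpoch_coeff p j k) (t (Suc k))))"
    unfolding left right by (simp add: scale_sum_right)
  also have "\<dots> = t 0 + (\<Sum>k\<le>j. smult (qpoch_coeff p (Suc j) (Suc k)) (t (Suc k)))"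
    by (simp add: qpoch_coeff_Suc_Suc scale_left_diff_distrib sum_subtractf)
  also have "\<dots> = (\<Sum>k\<le>Suc j. smult (qpoch_coeff p (Suc j) k) (t k))"
    by (simp only: sum.atMost_Suc_shift qpoch_coeff_0_right scale_one)
  finally show ?thesis
    unfolding t_def .
qed

lemma twisted_commutator_closed_form:
  fixes T :: "nat \<Rightarrow> nat \<Rightarrow> 'a"
  assumes step: "\<And>i j. j < m \<Longrightarrow> T i (Suc j) = smult (p ^ i) (X * T i j - T (Suc i) j * X)"
    and "j \<le> m"
  shows "T i j = smult (p ^ (i * j))
    (\<Sum>k\<le>j. smult (qpoch_coeff p j k) (X ^ (j - k) * T (i + k) 0 * X ^ k))"
  using \<open>j \<le> m\<close>
proof (induction j arbitrary: i)
  case 0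
  then show ?case by simp
next
  case (Suc j)
  have "T i (Suc j) = smult (p ^ i) (X * T i j - T (Suc i) j * X)"
    using Suc.prems by (simp add: step)
  also have "\<dots> = smult (p ^ i) (X * smult (p ^ (i * j))
        (\<Sum>k\<le>j. smult (qpoch_coeff p j k) (X ^ (j - k) * T (i + k) 0 * X ^ k))
      - smult (p ^ (Suc i * j))
        (\<Sum>k\<le>j. smult (qpoch_coeff p j k) (X ^ (j - k) * T (Suc i + k) 0 * X ^ k)) * X)"
    using Suc by simp
  also have "\<dots> = smult (p ^ (i * Suc j)) (X *
        (\<Sum>k\<le>j. smult (qpoch_coeff p j k) (X ^ (j - k) * T (i + k) 0 * X ^ k))
      - smult (p ^ j)
        ((\<Sum>k\<le>j. smult (qpoch_coeff p j k) (X ^ (j - k) * T (Suc i + k) 0 * X ^ k)) * X))"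
    by (simp add: smult_mult_left smult_mult_right scale_right_diff_distrib power_add mult_ac)
  also have "\<dots> = smult (p ^ (i * Suc j))
      (\<Sum>k\<le>Suc j. smult (qpoch_coeff p (Suc j) k) (X ^ (Suc j - k) * T (i + k) 0 * X ^ k))"
    using qpoch_sum_Suc[where A = "\<lambda>l. T l 0"] by simp
  finally show ?case .
qed

end

lemma finite_taft_basis [simp]: "finite (taft_basis n)"
  by (simp add: taft_basis_def)

lemma mem_taft_basis [simp]: "(i, j) \<in> taft_basis n \<longleftrightarrow> i < n \<and> j < n"
  by (simp add: taft_basis_def)

lemma taft_sc_eq:
  "taft_sc n q (i, j) (k, l) w = (if w = ((i + k) mod n, j + l) \<and> j + l < n then q ^ (j * k) else 0)"
  by (cases w) (auto simp: taft_sc_def)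

lemma sum_if_const_cond: "(\<Sum>x\<in>A. if P then f x else 0) = (if P then sum f A else 0)"
  by simp

lemma taft_mult_elem:
  assumes "v \<in> taft_basis n" "w \<in> taft_basis n"
  shows "taft_mult n q (taft_elem v) (taft_elem w) = taft_sc n q v w"
  using assms by (simp add: taft_mult_def taft_elem_def fun_eq_iff if_distrib[of "\<lambda>x. x * _"]
      sum_if_const_cond flip: if_if_eq_conj cong: if_cong)

lemma taft2_mult_elem:
  assumes "i < n" "k < n" "j + l < n" "i' < n" "k' < n" "j' + l' < n"
  shows "taft2_mult n q (taft2_elem (i, j) (i', j')) (taft2_elem (k, l) (k', l'))
    = (\<lambda>z. q ^ (j * k + j' * k') * taft2_elem ((i + k) mod n, j + l) ((i' + k') mod n, j' + l') z)"
proof -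
  have "taft2_mult n q (taft2_elem (i, j) (i', j')) (taft2_elem (k, l) (k', l'))
      = (\<lambda>(w, w'). taft_sc n q (i, j) (k, l) w * taft_sc n q (i', j') (k', l') w')"
    using assms by (simp add: taft2_mult_def taft2_elem_def if_distrib[of "\<lambda>x. x * _"]
        sum_if_const_cond flip: if_if_eq_conj cong: if_cong)
  then show ?thesis
    using assms by (auto simp: fun_eq_iff taft_sc_eq taft2_elem_def power_add)
qed

lemma taft2_mult_add_left:
  "taft2_mult n q (\<lambda>z. S z + S' z) T = (\<lambda>z. taft2_mult n q S T z + taft2_mult n q S' T z)"
  by (auto simp: fun_eq_iff taft2_mult_def distrib_right sum.distrib)

lemma taft2_mult_add_right:
  "taft2_mult n q S (\<lambda>z. T z + T' z) = (\<lambda>z. taft2_mult n q S T z + taft2_mult n q S T' z)"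
  by (auto simp: fun_eq_iff taft2_mult_def distrib_left distrib_right sum.distrib)

lemma Delta_g_power:
  assumes "1 < n"
  shows "(taft2_mult n q Delta_g ^^ m) taft2_one = taft2_elem (m mod n, 0) (m mod n, 0)"
proof (induction m)
  case 0
  show ?case by (simp add: taft2_one_def)
next
  case (Suc m)
  then show ?case
    using assms by (simp add: Delta_g_def taft2_mult_elem mod_Suc_eq)
qed

lemma taft_comult_g_power:
  assumes "1 < n" "i < n"
  shows "taft_comult n q (i, 0) = taft2_elem (i, 0) (i, 0)"
  unfolding taft_comult_def Delta_g_power[OF assms(1)]
  using assms by (simp add: taft2_one_def taft2_mult_elem)

lemma taft_comult_g_power_x:
  assumes "1 < n" "i < n"
  shows "taft_comult n q (i, 1)
    = (\<lambda>z. taft2_elem (i, 1) (i, 0) z + taft2_elem (Suc i mod n, 0) (i, 1) z)"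
  unfolding taft_comult_def Delta_g_power[OF assms(1)]
  using assms by (simp add: Delta_x_def taft2_one_def
      taft2_mult_add_left taft2_mult_add_right taft2_mult_elem mod_Suc_eq)

context algebra_over_field
begin

lemma sum_smult_taft2_elem:
  assumes "v \<in> taft_basis n" "v' \<in> taft_basis n"
  shows "(\<Sum>u\<in>taft_basis n. \<Sum>u'\<in>taft_basis n. smult (taft2_elem v v' (u, u')) (f u u')) = f v v'"
  using assms by (simp add: taft2_elem_def if_distrib[of "\<lambda>c. smult c _"] sum_if_const_cond
      flip: if_if_eq_conj cong: if_cong)

lemma taft_act_ext_sc:
  assumes "0 < n"
  shows "taft_act_ext n smult act (taft_sc n q (i, j) (k, l)) a
    = (if j + l < n then smult (q ^ (j * k)) (act ((i + k) mod n, j + l) a) else 0)"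
  using assms by (simp add: taft_act_ext_def taft_sc_eq if_distrib[of "\<lambda>c. smult c _"] cong: if_cong)

end

locale partial_taft_action = algebra_over_field smult
  for smult :: "'k::field \<Rightarrow> 'a::{ring, monoid_mult} \<Rightarrow> 'a" +
  fixes n :: nat and q :: 'k and act :: "nat \<times> nat \<Rightarrow> 'a \<Rightarrow> 'a"
  assumes one_less_n: "1 < n"
    and partial_action: "taft_partial_action n q smult act"
begin

lemma act_zero: "i < n \<Longrightarrow> j < n \<Longrightarrow> act (i, j) 0 = 0"
  using partial_action unfolding taft_partial_action_def
  by (metis add_cancel_right_right mem_taft_basis)

lemma act_unit [simp]: "act (0, 0) a = a"
  using partial_action by (simp add: taft_partial_action_def)

lemma act_mult:
  "u \<in> taft_basis n \<Longrightarrow> act u (a * b)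
    = (\<Sum>v\<in>taft_basis n. \<Sum>v'\<in>taft_basis n. smult (taft_comult n q u (v, v')) (act v a * act v' b))"
  using partial_action by (simp add: taft_partial_action_def)

lemma act_act:
  "u \<in> taft_basis n \<Longrightarrow> w \<in> taft_basis n \<Longrightarrow> act u (act w a)
    = (\<Sum>v\<in>taft_basis n. \<Sum>v'\<in>taft_basis n. smult (taft_comult n q u (v, v'))
        (act v 1 * taft_act_ext n smult act (taft_mult n q (taft_elem v') (taft_elem w)) a))"
  using partial_action by (simp add: taft_partial_action_def)

lemma act_g_power_x_mult:
  assumes "i < n"
  shows "act (i, 1) (a * b) = act (i, 1) a * act (i, 0) b + act (Suc i mod n, 0) a * act (i, 1) b"
proof -
  have "(i, 1) \<in> taft_basis n"
    using assms one_less_n by simp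
  then show ?thesis
    using assms one_less_n
    by (simp only: act_mult taft_comult_g_power_x)
      (simp add: scale_left_distrib sum.distrib sum_smult_taft2_elem)
qed

lemma act_g_power_act:
  assumes "i < n" "k < n" "l < n"
  shows "act (i, 0) (act (k, l) a) = act (i, 0) 1 * act ((i + k) mod n, l) a"
  using assms one_less_n
  by (simp add: act_act taft_comult_g_power sum_smult_taft2_elem taft_mult_elem taft_act_ext_sc)

lemma act_g_power_x_act:
  assumes "i < n" "k < n" "Suc l < n"
  shows "act (i, 1) (act (k, l) a) = act (i, 1) 1 * act ((i + k) mod n, l) a
    + act (Suc i mod n, 0) 1 * smult (q ^ k) (act ((i + k) mod n, Suc l) a)"
proof -
  have "(i, 1) \<in> taft_basis n" "(k, l) \<in> taft_basis n"
    using assms one_less_n by simp_all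
  then show ?thesis
    using assms one_less_n
    by (simp only: act_act taft_comult_g_power_x)
      (simp add: scale_left_distrib sum.distrib sum_smult_taft2_elem taft_mult_elem taft_act_ext_sc)
qed

end

locale partial_taft_action_g_one = partial_taft_action +
  assumes act_g_one: "act (1, 0) 1 = 0"
begin

lemma act_g_inverse_one: "act (n - 1, 0) 1 = 0"
proof -
  have "act (n - 1, 0) 1 = act (n - 1, 0) (act (1, 0) 1)"
    using act_g_power_act[of "n - 1" 1 0 1] one_less_n by simp
  also have "\<dots> = 0"
    using one_less_n by (simp only: act_g_one) (simp add: act_zero)
  finally show ?thesis .
qed

lemma act_g_inverse_x_one: "act (n - 1, 1) 1 = - smult q (act (0, 1) 1)"
proof -
  have "act (n - 1, 1) 1 + smult q (act (0, 1) 1) = act (n - 1, 1) (act (1, 0) 1)"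
    using act_g_power_x_act[of "n - 1" 1 0 1] one_less_n by simp
  also have "\<dots> = 0"
    using one_less_n by (simp only: act_g_one) (simp add: act_zero)
  finally show ?thesis
    by (simp add: eq_neg_iff_add_eq_0)
qed

lemma act_g_inverse_x: "act (n - 1, 1) a = a * act (n - 1, 1) 1"
proof -
  have "act (n - 1, 1) a = act (n - 1, 1) a * act (n - 1, 0) 1 + act (Suc (n - 1) mod n, 0) a * act (n - 1, 1) 1"
    using act_g_power_x_mult[of "n - 1" a 1] one_less_n by simp
  also have "\<dots> = a * act (n - 1, 1) 1"
    using one_less_n by (simp only: act_g_inverse_one) simp
  finally show ?thesis .
qed

lemma act_g_inverse_x_act:
  assumes "i < n" "Suc j < n"
  shows "act (Suc i mod n, j) a * act (n - 1, 1) 1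
    = act (n - 1, 1) 1 * act (i, j) a + smult (q ^ (Suc i mod n)) (act (i, Suc j) a)"
proof -
  have "act (Suc i mod n, j) a * act (n - 1, 1) 1 = act (n - 1, 1) (act (Suc i mod n, j) a)"
    by (rule act_g_inverse_x[symmetric])
  also have "\<dots> = act (n - 1, 1) 1 * act ((n - 1 + Suc i mod n) mod n, j) a
      + act (Suc (n - 1) mod n, 0) 1
        * smult (q ^ (Suc i mod n)) (act ((n - 1 + Suc i mod n) mod n, Suc j) a)"
    using assms one_less_n by (intro act_g_power_x_act) simp_all
  also have "\<dots> = act (n - 1, 1) 1 * act (i, j) a + smult (q ^ (Suc i mod n)) (act (i, Suc j) a)"
    using one_less_n by (simp only: pred_plus_Suc_mod[OF assms(1)]) simp
  finally show ?thesis .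
qed

lemma act_x_power_Suc:
  assumes "q ^ n = 1" "i < n" "Suc j < n"
  shows "act (i, Suc j) a
    = smult (inverse q ^ i) (act (0, 1) 1 * act (i, j) a - act (Suc i mod n, j) a * act (0, 1) 1)"
proof -
  let ?X = "act (0, 1) 1" and ?Y = "act (n - 1, 1) 1"
  have "smult (q ^ Suc i) (act (i, Suc j) a) = act (Suc i mod n, j) a * ?Y - ?Y * act (i, j) a"
    using act_g_inverse_x_act[OF assms(2,3), of a]
    unfolding power_mod_exponent[OF assms(1)] by (simp add: eq_diff_eq add.commute)
  also have "\<dots> = smult q (?X * act (i, j) a - act (Suc i mod n, j) a * ?X)"
    unfolding act_g_inverse_x_one mult_minus_left mult_minus_right smult_mult_left smult_mult_right
    by (simp add: scale_right_diff_distrib)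
  finally have scaled: "smult (q ^ Suc i) (act (i, Suc j) a)
      = smult q (?X * act (i, j) a - act (Suc i mod n, j) a * ?X)" .
  have "q \<noteq> 0"
    using assms(1) one_less_n by (auto simp: power_0_left)
  then have "inverse q ^ Suc i * q ^ Suc i = 1"
    by (metis power_mult_distrib left_inverse power_one)
  moreover have "inverse q ^ Suc i * q = inverse q ^ i"
    using \<open>q \<noteq> 0\<close> by (simp add: power_Suc2 mult.assoc)
  ultimately show ?thesis
    by (metis scaled scale_scale scale_one)
qed

end

theorem proposition3p3:
  fixes q :: "'k::field" and n :: nat
    and smult :: "'k \<Rightarrow> 'a::{ring, monoid_mult} \<Rightarrow> 'a"
    and act :: "nat \<times> nat \<Rightarrow> 'a \<Rightarrow> 'a"
  assumes "n \<ge> 2"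
    and "primitive_root q n"
    and "k_algebra smult"
    and "taft_partial_action n q smult act"
    and "act (1, 0) 1 = 0"
    and "i < n" and "j < n"
  shows "act (i, j) a =
    smult (inverse q ^ (i * j))
      (\<Sum>k\<le>j. smult ((- 1) ^ k * inverse q ^ (k * (k - 1) div 2) * qbinom (inverse q) j k)
                   (act (0, 1) 1 ^ (j - k) * act ((i + k) mod n, 0) a * act (0, 1) 1 ^ k))"
proof -
  interpret algebra_over_field smult
    using assms(3) by (rule k_algebra_imp_algebra_over_field)
  interpret partial_taft_action_g_one smult n q act
    using assms(1,4,5) by unfold_locales simp_all
  have q_pow_n: "q ^ n = 1" and inverse_q_pow_n: "inverse q ^ n = 1"
    using assms(2) by (simp_all add: primitive_root_def power_inverse)
  define X where "X = act (0, 1) 1"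
  define T where "T i j = act (i mod n, j) a" for i j
  have "T i (Suc j) = smult (inverse q ^ i) (X * T i j - T (Suc i) j * X)" if "j < n - 1" for i j
    using act_x_power_Suc[OF q_pow_n, of "i mod n" j a] that one_less_n
    by (simp add: T_def X_def power_mod_exponent[OF inverse_q_pow_n] mod_Suc_eq)
  moreover have "j \<le> n - 1"
    using assms(7) by simp
  ultimately have "T i j = smult (inverse q ^ (i * j))
      (\<Sum>k\<le>j. smult (qpoch_coeff (inverse q) j k) (X ^ (j - k) * T (i + k) 0 * X ^ k))"
    by (rule twisted_commutator_closed_form)
  then show ?thesis
    using assms(6) by (simp add: T_def X_def qpoch_coeff_def)
qed

end
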